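(* Let $\lambda,\mu$ be weights. If $\mu\subset\lambda$ then $\mu\le\lambda$ in the Bruhat order. Moreover: (i) if $a\lambda$ is an oriented cup diagram then $a=\underline\alpha$ for a unique weight $\alpha$ with $\alpha\subset\lambda$; (ii) if $\lambda b$ is an oriented cap diagram then $b=\overline\beta$ for a unique weight $\beta$ with $\lambda\supset\beta$; (iii) if $a\lambda b$ is an oriented circle diagram then $a=\underline\alpha$ and $b=\overline\beta$ for unique weights $\alpha,\beta$ with $\alpha\subset\lambda\supset\beta$.
   Context: A number line carries vertices indexed by consecutive integers. A weight labels each vertex by $\circ,\times,\vee,\wedge$ such that outside a finite set no $\vee$ is left of an $\wedge$. The Bruhat order $\le$ is generated by declaring that interchanging a $\vee$ with an $\wedge$ to its right makes a weight bigger. $\lambda\sim\mu$ if $\mu$ is obtained from $\lambda$ by permuting $\vee$'s and $\wedge$'s. A cup diagram consists of finitely many non-crossing cups joining pairs of vertices and rays down to infinity; cap diagrams similarly with caps and upward rays; $c^*$ is the mirror image. $c\lambda$ is an oriented cup diagram if free vertices are labelled $\circ/\times$, each cup has one $\vee$ and one $\wedge$ end, ray vertices are $\vee/\wedge$, and no two rays are labelled $\vee,\wedge$ in that order left to right; $\lambda c$ for a cap diagram is oriented if $c^*\lambda$ is. Degree: number of clockwise cups/caps (left end labelled $\wedge$). An oriented circle diagram $a\lambda b$ has $a\lambda$, $\lambda b$ oriented. $\underline\lambda$ is the unique cup diagram with $\underline\lambda\lambda$ oriented of degree $0$; $\overline\lambda=(\underline\lambda)^*$. $\mu\subset\lambda$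 (also written $\lambda\supset\mu$) means $\mu\sim\lambda$ and $\underline\mu\lambda$ is an oriented cup diagram. *)

theory Defs
  imports Main
begin

text \<open>Vertex labels: Circ = circle, Cross = cross, Down = vee, Up = wedge.
  The number line is the set of all integers.\<close>
datatype vlabel = Circ | Cross | Down | Up

type_synonym wt = "int \<Rightarrow> vlabel"

definition weight :: "wt \<Rightarrow> bool" where
  "weight l \<longleftrightarrow> (\<exists>F. finite F \<and>
     (\<forall>i j. i \<notin> F \<longrightarrow> j \<notin> F \<longrightarrow> i < j \<longrightarrow> \<not> (l i = Down \<and> l j = Up)))"

definition bruhat_step :: "wt \<Rightarrow> wt \<Rightarrow> bool" where
  "bruhat_step l l' \<longleftrightarrow> (\<exists>i j. i < j \<and> l i = Down \<and> l j = Up \<and> l' = l(i := Up, j := Down))"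

definition bruhat_le :: "wt \<Rightarrow> wt \<Rightarrow> bool" where
  "bruhat_le m l \<longleftrightarrow> bruhat_step\<^sup>*\<^sup>* m l"

definition wsim :: "wt \<Rightarrow> wt \<Rightarrow> bool" where
  "wsim l m \<longleftrightarrow> (\<exists>\<sigma>::int \<Rightarrow> int. bij \<sigma> \<and> finite {i. \<sigma> i \<noteq> i} \<and>
     (\<forall>i. \<sigma> i \<noteq> i \<longrightarrow> l i \<in> {Down, Up}) \<and> m = l \<circ> \<sigma>)"

datatype cupdiag = CupD (cups: "(int \<times> int) set") (rays: "int set")
datatype capdiag = CapD (caps: "(int \<times> int) set") (uprays: "int set")

definition endpoints :: "(int \<times> int) set \<Rightarrow> int set" where
  "endpoints C = fst ` C \<union> snd ` C"

definition is_cup_diagram :: "cupdiag \<Rightarrow> bool" where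
  "is_cup_diagram c \<longleftrightarrow>
     finite (cups c) \<and>
     (\<forall>(i,j)\<in>cups c. i < j) \<and>
     (\<forall>(i,j)\<in>cups c. \<forall>(k,l)\<in>cups c. {i,j} \<inter> {k,l} \<noteq> {} \<longrightarrow> (i,j) = (k,l)) \<and>
     (\<forall>(i,j)\<in>cups c. \<forall>(k,l)\<in>cups c. i < k \<and> k < j \<longrightarrow> l < j) \<and>
     rays c \<inter> endpoints (cups c) = {} \<and>
     (\<forall>(i,j)\<in>cups c. \<forall>k\<in>rays c. \<not> (i < k \<and> k < j))"

definition cap_mirror :: "capdiag \<Rightarrow> cupdiag" where
  "cap_mirror b = CupD (caps b) (uprays b)"

definition cup_mirror :: "cupdiag \<Rightarrow> capdiag" where
  "cup_mirror a = CapD (cups a) (rays a)"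

definition is_cap_diagram :: "capdiag \<Rightarrow> bool" where
  "is_cap_diagram b \<longleftrightarrow> is_cup_diagram (cap_mirror b)"

definition oriented_cup :: "cupdiag \<Rightarrow> wt \<Rightarrow> bool" where
  "oriented_cup c l \<longleftrightarrow>
     (\<forall>i. i \<notin> endpoints (cups c) \<and> i \<notin> rays c \<longrightarrow> l i \<in> {Circ, Cross}) \<and>
     (\<forall>(i,j)\<in>cups c. (l i = Down \<and> l j = Up) \<or> (l i = Up \<and> l j = Down)) \<and>
     (\<forall>i\<in>rays c. l i \<in> {Down, Up}) \<and>
     (\<forall>i\<in>rays c. \<forall>j\<in>rays c. i < j \<longrightarrow> \<not> (l i = Down \<and> l j = Up))"

definition oriented_cap :: "wt \<Rightarrow> capdiag \<Rightarrow> bool" where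
  "oriented_cap l b \<longleftrightarrow> oriented_cup (cap_mirror b) l"

text \<open>Degree: number of clockwise cups (left end labelled wedge).\<close>
definition cup_degree :: "cupdiag \<Rightarrow> wt \<Rightarrow> nat" where
  "cup_degree c l = card {(i,j). (i,j) \<in> cups c \<and> l i = Up}"

definition underline :: "wt \<Rightarrow> cupdiag" where
  "underline l = (THE c. is_cup_diagram c \<and> oriented_cup c l \<and> cup_degree c l = 0)"

definition overline :: "wt \<Rightarrow> capdiag" where
  "overline l = cup_mirror (underline l)"

definition wsub :: "wt \<Rightarrow> wt \<Rightarrow> bool" where
  "wsub m l \<longleftrightarrow> wsim m l \<and> oriented_cup (underline m) l"

end

theory Submission
  imports Defs "HOL-Combinatorics.Permutations"
begin

text \<open>
  Read a weight as a walk on the number line that steps up at each vee and down at each wedge.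
  In an oriented cup diagram of degree 0 every cup is anticlockwise (vee on the left), and the
  height measured from the left end of a cup stays positive until the cup closes, where it is 0;
  this pins down the cups of the cup diagram as the first-return pairs of the walk, and the rays
  as the remaining vees and wedges, so the cup diagram is unique.

  If two weights obtained from each other by permuting vees and wedges orient the same cup
  diagram, they have the same height over a long interval, and that height only counts rays.
  Since rays are labelled by wedges followed by vees, the two weights agree on all rays, hence
  off the cups. So a weight \<open>l\<close> with \<open>m \<subset> l\<close> arises from \<open>m\<close> by reversing some anticlockwise cups
  of the underline of \<open>m\<close>, each reversal being a Bruhat step; and for a cup diagram \<open>a\<close> oriented
  by \<open>l\<close>, the weight \<open>\<alpha>\<close> is obtained from \<open>l\<close> by making every cup of \<open>a\<close> anticlockwise.
\<close>

section \<open>Heights\<close>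

fun vsign :: "vlabel \<Rightarrow> int" where
  "vsign Down = 1" | "vsign Up = -1" | "vsign Circ = 0" | "vsign Cross = 0"

definition height :: "wt \<Rightarrow> int \<Rightarrow> int \<Rightarrow> int" where
  "height l p q = (\<Sum>k\<in>{p..q}. vsign (l k))"

lemma vsign_bounds: "-1 \<le> vsign x \<and> vsign x \<le> 1"
  by (cases x) auto

lemma vsign_ge_1D: "vsign x \<ge> 1 \<Longrightarrow> x = Down"
  by (cases x) auto

lemma vsign_le_neg1D: "vsign x \<le> -1 \<Longrightarrow> x = Up"
  by (cases x) auto

lemma height_single: "height l p p = vsign (l p)"
  by (simp add: height_def)

lemma height_split:
  assumes "p - 1 \<le> m" "m \<le> q"
  shows "height l p q = height l p m + height l (m + 1) q"
proof -
  have "{p..q} = {p..m} \<union> {m+1..q}" "{p..m} \<inter> {m+1..q} = {}"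
    using assms by auto
  then show ?thesis
    unfolding height_def by (simp add: sum.union_disjoint)
qed

lemma height_snoc: "p \<le> q \<Longrightarrow> height l p q = height l p (q - 1) + vsign (l q)"
  using height_split[of p "q - 1" q l] by (simp add: height_single)

lemma height_cons: "p \<le> q \<Longrightarrow> height l p q = vsign (l p) + height l (p + 1) q"
  using height_split[of p p q l] by (simp add: height_single)

lemma is_cup_diagramD:
  assumes "is_cup_diagram c"
  shows "finite (cups c)"
    and "\<forall>(i, j)\<in>cups c. i < j"
    and "\<forall>(i, j)\<in>cups c. \<forall>(k, q)\<in>cups c. {i, j} \<inter> {k, q} \<noteq> {} \<longrightarrow> (i, j) = (k, q)"
    and "\<forall>(i, j)\<in>cups c. \<forall>(k, q)\<in>cups c. i < k \<and> k < j \<longrightarrow> q < j"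
    and "rays c \<inter> endpoints (cups c) = {}"
    and "\<forall>(i, j)\<in>cups c. \<forall>x\<in>rays c. \<not> (i < x \<and> x < j)"
  using assms unfolding is_cup_diagram_def by simp_all

lemma cup_diagram_finite: "is_cup_diagram c \<Longrightarrow> finite (cups c)"
  by (rule is_cup_diagramD(1))

lemma cup_diagram_lt: "is_cup_diagram c \<Longrightarrow> (i, j) \<in> cups c \<Longrightarrow> i < j"
  using is_cup_diagramD(2) by fast

lemma cup_diagram_disjoint:
  "is_cup_diagram c \<Longrightarrow> (i, j) \<in> cups c \<Longrightarrow> (k, q) \<in> cups c \<Longrightarrow> {i, j} \<inter> {k, q} \<noteq> {} \<Longrightarrow>
    i = k \<and> j = q"
  using is_cup_diagramD(3) by fast

lemma cup_diagram_nested: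
  "is_cup_diagram c \<Longrightarrow> (i, j) \<in> cups c \<Longrightarrow> (k, q) \<in> cups c \<Longrightarrow> i < k \<Longrightarrow> k < j \<Longrightarrow> q < j"
  using is_cup_diagramD(4) by fast

lemma cup_diagram_ray_not_endpoint: "is_cup_diagram c \<Longrightarrow> x \<in> rays c \<Longrightarrow> x \<notin> endpoints (cups c)"
  using is_cup_diagramD(5) by fast

lemma cup_diagram_ray_not_under_cup:
  "is_cup_diagram c \<Longrightarrow> (i, j) \<in> cups c \<Longrightarrow> x \<in> rays c \<Longrightarrow> i < x \<Longrightarrow> x < j \<Longrightarrow> False"
  using is_cup_diagramD(6) by fast

lemma oriented_cupD:
  assumes "oriented_cup c g"
  shows "\<forall>x. x \<notin> endpoints (cups c) \<and> x \<notin> rays c \<longrightarrow> g x \<in> {Circ, Cross}"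
    and "\<forall>(i, j)\<in>cups c. (g i = Down \<and> g j = Up) \<or> (g i = Up \<and> g j = Down)"
    and "\<forall>x\<in>rays c. g x \<in> {Down, Up}"
    and "\<forall>x\<in>rays c. \<forall>y\<in>rays c. x < y \<longrightarrow> \<not> (g x = Down \<and> g y = Up)"
  using assms unfolding oriented_cup_def by simp_all

lemma oriented_cup_free:
  "oriented_cup c g \<Longrightarrow> x \<notin> endpoints (cups c) \<Longrightarrow> x \<notin> rays c \<Longrightarrow> g x \<in> {Circ, Cross}"
  using oriented_cupD(1) by blast

lemma oriented_cup_ends:
  "oriented_cup c g \<Longrightarrow> (i, j) \<in> cups c \<Longrightarrow> (g i = Down \<and> g j = Up) \<or> (g i = Up \<and> g j = Down)"
  using oriented_cupD(2) by fast

lemma oriented_cup_ray: "oriented_cup c g \<Longrightarrow> x \<in> rays c \<Longrightarrow> g x \<in> {Down, Up}"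
  using oriented_cupD(3) by blast

lemma oriented_cup_rays_order:
  "oriented_cup c g \<Longrightarrow> x \<in> rays c \<Longrightarrow> y \<in> rays c \<Longrightarrow> x < y \<Longrightarrow> g x = Down \<Longrightarrow> g y \<noteq> Up"
  using oriented_cupD(4) by blast

definition clockwise_cups :: "cupdiag \<Rightarrow> wt \<Rightarrow> (int \<times> int) set" where
  "clockwise_cups c l = {(i, j). (i, j) \<in> cups c \<and> l i = Up}"

lemma clockwise_cups_subset: "clockwise_cups c l \<subseteq> cups c"
  unfolding clockwise_cups_def by auto

lemma cup_degree_eq_card_clockwise: "cup_degree c l = card (clockwise_cups c l)"
  unfolding cup_degree_def clockwise_cups_def ..

lemma cup_degree_eq_0_iff:
  assumes "is_cup_diagram c"
  shows "cup_degree c l = 0 \<longleftrightarrow> clockwise_cups c l = {}"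
proof -
  have "finite (clockwise_cups c l)"
    using cup_diagram_finite[OF assms] unfolding clockwise_cups_def
    by (rule finite_subset[rotated]) auto
  then show ?thesis
    unfolding cup_degree_eq_card_clockwise by simp
qed

lemma cup_degree_0_anticlockwise:
  assumes "is_cup_diagram c" "oriented_cup c l" "cup_degree c l = 0" "(i, j) \<in> cups c"
  shows "l i = Down \<and> l j = Up"
proof -
  have "(i, j) \<notin> clockwise_cups c l"
    using assms(1,3) cup_degree_eq_0_iff by blast
  then show ?thesis
    using oriented_cup_ends[OF assms(2,4)] assms(4) unfolding clockwise_cups_def by auto
qed

lemma cup_diagram_right_unique:
  "is_cup_diagram c \<Longrightarrow> (i, j) \<in> cups c \<Longrightarrow> (i, q) \<in> cups c \<Longrightarrow> j = q"
  using cup_diagram_disjoint by blast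

lemma cup_diagram_left_unique:
  "is_cup_diagram c \<Longrightarrow> (i, j) \<in> cups c \<Longrightarrow> (k, j) \<in> cups c \<Longrightarrow> i = k"
  using cup_diagram_disjoint by blast

lemma cup_diagram_inj_on_fst: "is_cup_diagram c \<Longrightarrow> inj_on fst (cups c)"
  by (rule inj_onI) (metis cup_diagram_right_unique prod.collapse)

lemma cup_diagram_inj_on_snd: "is_cup_diagram c \<Longrightarrow> inj_on snd (cups c)"
  by (rule inj_onI) (metis cup_diagram_left_unique prod.collapse)

lemma cup_diagram_fst_snd_disjoint:
  assumes c: "is_cup_diagram c"
  shows "fst ` cups c \<inter> snd ` cups c = {}"
proof -
  have False if "(y, b) \<in> cups c" "(a, y) \<in> cups c" for a b y
  proof -
    have "y = a"
      using cup_diagram_disjoint[OF c that] by blast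
    then show False
      using cup_diagram_lt[OF c that(2)] by simp
  qed
  then show ?thesis
    by fastforce
qed

lemma cup_diagram_closing_inside_cup:
  assumes c: "is_cup_diagram c" and ij: "(i, j) \<in> cups c" and ab: "(a, b) \<in> cups c"
    and "i \<le> b" "b \<le> j"
  shows "i \<le> a"
proof (rule ccontr)
  assume "\<not> i \<le> a"
  moreover have "b \<notin> {i, j}"
  proof
    assume "b \<in> {i, j}"
    then have "a = i"
      using cup_diagram_disjoint[OF c ab ij] by blast
    then show False
      using \<open>\<not> i \<le> a\<close> by simp
  qed
  ultimately show False
    using cup_diagram_nested[OF c ab ij] assms(4,5) by simp
qed

lemma cup_diagram_no_ray_under_cup:
  assumes c: "is_cup_diagram c" and ij: "(i, j) \<in> cups c" and x: "x \<in> rays c"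
  shows "x < i \<or> j < x"
proof -
  have "i \<in> endpoints (cups c)" "j \<in> endpoints (cups c)"
    using ij unfolding endpoints_def by force+
  then have "x \<noteq> i" "x \<noteq> j"
    using cup_diagram_ray_not_endpoint[OF c x] by auto
  then show ?thesis
    using cup_diagram_ray_not_under_cup[OF c ij x] by force
qed

lemma endpoints_mono: "C \<subseteq> D \<Longrightarrow> endpoints C \<subseteq> endpoints D"
  unfolding endpoints_def by auto

lemma oriented_cup_reorient:
  assumes c: "is_cup_diagram c" and l: "oriented_cup c l"
    and outside: "\<And>x. x \<notin> endpoints (cups c) \<Longrightarrow> l' x = l x"
    and ends: "\<And>i j. (i, j) \<in> cups c \<Longrightarrow> (l' i = Down \<and> l' j = Up) \<or> (l' i = Up \<and> l' j = Down)"
  shows "oriented_cup c l'"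
proof -
  have rays: "l' x = l x" if "x \<in> rays c" for x
    using outside cup_diagram_ray_not_endpoint[OF c that] .
  show ?thesis
    unfolding oriented_cup_def
  proof (intro conjI ballI allI impI)
    show "l' x \<in> {Circ, Cross}" if "x \<notin> endpoints (cups c) \<and> x \<notin> rays c" for x
      using that oriented_cup_free[OF l, of x] outside[of x] by simp
    show "case p of (i, j) \<Rightarrow> (l' i = Down \<and> l' j = Up) \<or> (l' i = Up \<and> l' j = Down)"
      if "p \<in> cups c" for p
      using that ends by (cases p) simp
    show "l' x \<in> {Down, Up}" if "x \<in> rays c" for x
      using that oriented_cup_ray[OF l that] rays by simp
    show "\<not> (l' x = Down \<and> l' y = Up)" if "x \<in> rays c" "y \<in> rays c" "x < y" for x y
      using oriented_cup_rays_order[OF l that] rays that by simp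
  qed
qed

section \<open>Heights along an oriented cup diagram\<close>

definition open_cups :: "cupdiag \<Rightarrow> int \<Rightarrow> int \<Rightarrow> (int \<times> int) set" where
  "open_cups c p k = {x \<in> cups c. p \<le> fst x \<and> fst x \<le> k \<and> k < snd x}"

text \<open>Cups lying inside \<open>{p..k}\<close> contribute 0 to the height; a cup opened but not closed in
  \<open>{p..k}\<close> contributes the label of its left end.\<close>

lemma height_through_cup_diagram:
  assumes c: "is_cup_diagram c" and g: "oriented_cup c g"
    and no_closing: "\<And>a b. (a, b) \<in> cups c \<Longrightarrow> p \<le> b \<Longrightarrow> b \<le> k \<Longrightarrow> p \<le> a"
  shows "height g p k = (\<Sum>x\<in>open_cups c p k. vsign (g (fst x))) + (\<Sum>x\<in>rays c \<inter> {p..k}. vsign (g x))"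
proof -
  let ?s = "\<lambda>y. vsign (g y)"
  define E where "E = endpoints (cups c) \<inter> {p..k}"
  define Left where "Left = {x \<in> cups c. p \<le> fst x \<and> fst x \<le> k}"
  define Inner where "Inner = {x \<in> cups c. p \<le> fst x \<and> snd x \<le> k}"
  have fin: "finite (cups c)"
    using c by (rule cup_diagram_finite)
  have "height g p k = sum ?s (E \<union> rays c \<inter> {p..k})"
    unfolding height_def
  proof (rule sum.mono_neutral_right)
    show "\<forall>y\<in>{p..k} - (E \<union> rays c \<inter> {p..k}). ?s y = 0"
    proof
      fix y
      assume "y \<in> {p..k} - (E \<union> rays c \<inter> {p..k})"
      then have "g y \<in> {Circ, Cross}"
        using oriented_cup_free[OF g, of y] unfolding E_def by blast
      then show "?s y = 0"
        by auto
    qed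
  qed (auto simp: E_def)
  also have "\<dots> = sum ?s E + sum ?s (rays c \<inter> {p..k})"
  proof (rule sum.union_disjoint)
    show "E \<inter> (rays c \<inter> {p..k}) = {}"
      using cup_diagram_ray_not_endpoint[OF c] unfolding E_def by blast
  qed (auto simp: E_def)
  also have "sum ?s E = (\<Sum>x\<in>open_cups c p k. ?s (fst x))"
  proof -
    have "E \<subseteq> fst ` Left \<union> snd ` Inner"
    proof
      fix y
      assume "y \<in> E"
      then consider x where "x \<in> cups c" "y = fst x" "p \<le> y" "y \<le> k"
        | x where "x \<in> cups c" "y = snd x" "p \<le> y" "y \<le> k"
        unfolding E_def endpoints_def by auto
      then show "y \<in> fst ` Left \<union> snd ` Inner"
      proof cases
        case 1
        then show ?thesis
          unfolding Left_def by auto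
      next
        case 2
        then have "p \<le> fst x"
          using no_closing[of "fst x" "snd x"] by simp
        then show ?thesis
          using 2 unfolding Inner_def by auto
      qed
    qed
    moreover have "fst ` Left \<union> snd ` Inner \<subseteq> E"
      using cup_diagram_lt[OF c] unfolding E_def Left_def Inner_def endpoints_def by force
    ultimately have E: "E = fst ` Left \<union> snd ` Inner"
      by (rule subset_antisym)
    have "sum ?s E = sum ?s (fst ` Left) + sum ?s (snd ` Inner)"
      unfolding E
    proof (rule sum.union_disjoint)
      show "fst ` Left \<inter> snd ` Inner = {}"
        using cup_diagram_fst_snd_disjoint[OF c] unfolding Left_def Inner_def by blast
    qed (use fin in \<open>auto simp: Left_def Inner_def\<close>)
    also have "\<dots> = (\<Sum>x\<in>Left. ?s (fst x)) + (\<Sum>x\<in>Inner. ?s (snd x))"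
      using inj_on_subset[OF cup_diagram_inj_on_fst[OF c]] inj_on_subset[OF cup_diagram_inj_on_snd[OF c]]
      by (simp add: sum.reindex Left_def Inner_def)
    also have "Left = Inner \<union> open_cups c p k"
      using cup_diagram_lt[OF c] unfolding Left_def Inner_def open_cups_def by force
    also have "(\<Sum>x\<in>Inner \<union> open_cups c p k. ?s (fst x)) =
        (\<Sum>x\<in>Inner. ?s (fst x)) + (\<Sum>x\<in>open_cups c p k. ?s (fst x))"
      using fin by (intro sum.union_disjoint) (auto simp: Inner_def open_cups_def)
    also have "(\<Sum>x\<in>Inner. ?s (fst x)) + (\<Sum>x\<in>Inner. ?s (snd x)) = 0"
    proof -
      have "?s (fst x) + ?s (snd x) = 0" if "x \<in> Inner" for x
        using that oriented_cup_ends[OF g, of "fst x" "snd x"] unfolding Inner_def by auto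
      then show ?thesis
        by (simp add: sum.distrib[symmetric])
    qed
    ultimately show ?thesis
      by simp
  qed
  finally show ?thesis .
qed

lemma height_eq_ray_sum:
  assumes c: "is_cup_diagram c" and g: "oriented_cup c g" and ends: "endpoints (cups c) \<subseteq> {p..k}"
  shows "height g p k = (\<Sum>x\<in>rays c \<inter> {p..k}. vsign (g x))"
proof -
  have "fst x \<in> {p..k}" "snd x \<in> {p..k}" if "x \<in> cups c" for x
    using that ends unfolding endpoints_def by blast+
  then have "open_cups c p k = {}" "\<And>a b. (a, b) \<in> cups c \<Longrightarrow> p \<le> a"
    unfolding open_cups_def by fastforce+
  then show ?thesis
    using height_through_cup_diagram[OF c g] by simp
qed

section \<open>The canonical cup diagram of a weight\<close>

definition matched_cups :: "wt \<Rightarrow> (int \<times> int) set" where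
  "matched_cups l = {(i, j). i < j \<and> l i = Down \<and> height l i j = 0 \<and>
     (\<forall>k. i \<le> k \<and> k < j \<longrightarrow> height l i k > 0)}"

definition canonical_rays :: "wt \<Rightarrow> int set" where
  "canonical_rays l = {i. l i \<in> {Down, Up}} - endpoints (matched_cups l)"

definition canonical_cup_diagram :: "wt \<Rightarrow> cupdiag" where
  "canonical_cup_diagram l = CupD (matched_cups l) (canonical_rays l)"

lemma matched_cupsD:
  assumes "(i, j) \<in> matched_cups l"
  shows matched_cups_lt: "i < j"
    and matched_cups_Down: "l i = Down"
    and matched_cups_height_zero: "height l i j = 0"
    and matched_cups_height_pos: "i \<le> k \<Longrightarrow> k < j \<Longrightarrow> height l i k > 0"
  using assms unfolding matched_cups_def by auto

lemma matched_cups_Up: "(i, j) \<in> matched_cups l \<Longrightarrow> l j = Up"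
  using height_snoc[of i j l] matched_cups_lt[of i j l] matched_cups_height_zero[of i j l]
    matched_cups_height_pos[of i j l "j - 1"]
  by (auto intro: vsign_le_neg1D)

lemma matched_cups_right_unique: "(i, j) \<in> matched_cups l \<Longrightarrow> (i, j') \<in> matched_cups l \<Longrightarrow> j = j'"
  using matched_cupsD by (metis less_irrefl linorder_neqE_linordered_idom order.strict_implies_order)

lemma matched_cups_nested:
  assumes ij: "(i, j) \<in> matched_cups l" and kq: "(k, q) \<in> matched_cups l" and "i < k" "k < j"
  shows "q < j"
proof -
  have "height l i j = height l i (k - 1) + height l k j"
    using height_split[of i "k - 1" j l] assms by simp
  moreover have "height l i (k - 1) > 0"
    using matched_cups_height_pos[OF ij] assms by simp
  ultimately have "height l k j < 0"
    using matched_cups_height_zero[OF ij] by simp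
  then show ?thesis
    using matched_cups_height_pos[OF kq, of j] matched_cups_height_zero[OF kq] \<open>k < j\<close>
    by (metis less_asym linorder_neqE_linordered_idom order.strict_implies_order)
qed

lemma matched_cups_left_unique: "(i, j) \<in> matched_cups l \<Longrightarrow> (i', j) \<in> matched_cups l \<Longrightarrow> i = i'"
  using matched_cups_nested matched_cups_lt by (metis less_irrefl linorder_neqE_linordered_idom)

lemma Down_matched_if_height_nonpos:
  assumes "l k = Down" "k \<le> j" "height l k j \<le> 0"
  shows "\<exists>q. (k, q) \<in> matched_cups l"
proof -
  define P where "P n \<longleftrightarrow> height l k (k + int n) \<le> 0" for n
  have "P (nat (j - k))"
    using assms unfolding P_def by simp
  then have P_least: "P (LEAST n. P n)"
    by (rule LeastI)
  have below_least: "\<not> P n" if "n < (LEAST n. P n)" for n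
    using that by (rule not_less_Least)
  define q where "q = k + int (LEAST n. P n)"
  have pos: "height l k m > 0" if "k \<le> m" "m < q" for m
  proof -
    have "nat (m - k) < (LEAST n. P n)"
      using that unfolding q_def by linarith
    then show ?thesis
      using below_least that unfolding P_def by fastforce
  qed
  have "\<not> P 0"
    using assms(1) unfolding P_def by (simp add: height_single)
  then have "k < q"
    using P_least unfolding q_def by (metis gr0I of_nat_0_less_iff less_add_same_cancel1)
  then have "height l k q = height l k (q - 1) + vsign (l q)" "height l k (q - 1) > 0"
    using height_snoc[of k q l] pos[of "q - 1"] by auto
  moreover have "height l k q \<le> 0"
    using P_least unfolding P_def q_def .
  ultimately have "height l k q = 0"
    using vsign_bounds[of "l q"] by linarith
  then have "(k, q) \<in> matched_cups l"
    unfolding matched_cups_def using assms(1) \<open>k < q\<close> pos by auto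
  then show ?thesis ..
qed

lemma Up_matched_if_height_nonneg:
  assumes "l j = Up" "i \<le> j" "height l i j \<ge> 0"
  shows "\<exists>p. (p, j) \<in> matched_cups l"
proof -
  define Z where "Z = {p. i \<le> p \<and> p \<le> j \<and> height l p j \<ge> 0}"
  have "finite Z" "i \<in> Z"
    using assms unfolding Z_def by (auto intro: finite_subset[of _ "{i..j}"])
  define p where "p = Max Z"
  have "p \<in> Z" and above_max: "\<And>m. m \<in> Z \<Longrightarrow> m \<le> p"
    unfolding p_def using \<open>finite Z\<close> \<open>i \<in> Z\<close> by (auto intro: Max_in)
  have "p \<noteq> j"
    using \<open>p \<in> Z\<close> assms(1) unfolding Z_def by (auto simp: height_single)
  then have "p < j" "height l p j \<ge> 0"
    using \<open>p \<in> Z\<close> unfolding Z_def by auto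
  have neg: "height l m j < 0" if "p < m" "m \<le> j" for m
    using above_max[of m] that \<open>p \<in> Z\<close> unfolding Z_def by force
  have "height l p j = vsign (l p) + height l (p + 1) j"
    using height_cons[of p j l] \<open>p < j\<close> by simp
  then have "vsign (l p) \<ge> 1" "height l p j = 0"
    using neg[of "p + 1"] \<open>p < j\<close> \<open>height l p j \<ge> 0\<close> vsign_bounds[of "l p"] by linarith+
  moreover have "height l p m > 0" if "p \<le> m" "m < j" for m
    using height_split[of p m j l] neg[of "m + 1"] that \<open>height l p j = 0\<close> by simp
  ultimately have "(p, j) \<in> matched_cups l"
    unfolding matched_cups_def using \<open>p < j\<close> by (auto intro: vsign_ge_1D)
  then show ?thesis ..
qed

lemma matched_cups_inside:
  assumes ij: "(i, j) \<in> matched_cups l" and "i < k" "k < j" "l k \<in> {Down, Up}"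
  shows "k \<in> endpoints (matched_cups l)"
proof (cases "l k = Down")
  case True
  have "height l i j = height l i (k - 1) + height l k j"
    using height_split[of i "k - 1" j l] assms by simp
  moreover have "height l i (k - 1) > 0"
    using matched_cups_height_pos[OF ij] assms by simp
  ultimately have "height l k j \<le> 0"
    using matched_cups_height_zero[OF ij] by simp
  then obtain q where "(k, q) \<in> matched_cups l"
    using Down_matched_if_height_nonpos[of l k j] True assms by force
  then show ?thesis
    unfolding endpoints_def by force
next
  case False
  then have "l k = Up" "height l i k \<ge> 0"
    using assms matched_cups_height_pos[OF ij, of k] by auto
  then obtain p where "(p, k) \<in> matched_cups l"
    using Up_matched_if_height_nonneg[of l k i] assms by force
  then show ?thesis
    unfolding endpoints_def by force
qed

lemma finite_matched_cups:
  assumes "weight l"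
  shows "finite (matched_cups l)"
proof -
  obtain F where "finite F"
    and F: "\<And>i j. i \<notin> F \<Longrightarrow> j \<notin> F \<Longrightarrow> i < j \<Longrightarrow> \<not> (l i = Down \<and> l j = Up)"
    using assms unfolding weight_def by blast
  define L where "L = {x \<in> matched_cups l. fst x \<in> F}"
  define R where "R = {x \<in> matched_cups l. snd x \<in> F}"
  have "matched_cups l \<subseteq> L \<union> R"
  proof
    fix x
    assume "x \<in> matched_cups l"
    then show "x \<in> L \<union> R"
      using F[of "fst x" "snd x"] matched_cups_lt matched_cups_Down matched_cups_Up
      unfolding L_def R_def by (cases x) auto
  qed
  moreover have "finite L"
  proof (rule finite_imageD)
    show "finite (fst ` L)"
      unfolding L_def using \<open>finite F\<close> by (rule finite_subset[rotated]) auto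
    show "inj_on fst L"
      unfolding L_def inj_on_def using matched_cups_right_unique by fastforce
  qed
  moreover have "finite R"
  proof (rule finite_imageD)
    show "finite (snd ` R)"
      unfolding R_def using \<open>finite F\<close> by (rule finite_subset[rotated]) auto
    show "inj_on snd R"
      unfolding R_def inj_on_def using matched_cups_left_unique by fastforce
  qed
  ultimately show ?thesis
    using finite_subset by blast
qed

lemma is_cup_diagram_canonical:
  assumes "weight l"
  shows "is_cup_diagram (canonical_cup_diagram l)"
  unfolding is_cup_diagram_def canonical_cup_diagram_def cupdiag.sel
proof (intro conjI)
  show "finite (matched_cups l)"
    using assms by (rule finite_matched_cups)
  show "\<forall>(i, j)\<in>matched_cups l. i < j"
    using matched_cups_lt by blast
  show "\<forall>(i, j)\<in>matched_cups l. \<forall>(k, q)\<in>matched_cups l. {i, j} \<inter> {k, q} \<noteq> {} \<longrightarrow> (i, j) = (k, q)"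
  proof clarify
    fix i j k q
    assume cups: "(i, j) \<in> matched_cups l" "(k, q) \<in> matched_cups l" and "{i, j} \<inter> {k, q} \<noteq> {}"
    then have "i = k \<or> j = q"
      using matched_cups_Down[OF cups(1)] matched_cups_Up[OF cups(1)]
        matched_cups_Down[OF cups(2)] matched_cups_Up[OF cups(2)] by auto
    then show "i = k \<and> j = q"
      using matched_cups_right_unique[OF cups(1)] matched_cups_left_unique[OF cups(1)] cups(2) by blast
  qed
  show "\<forall>(i, j)\<in>matched_cups l. \<forall>(k, q)\<in>matched_cups l. i < k \<and> k < j \<longrightarrow> q < j"
    using matched_cups_nested by blast
  show "canonical_rays l \<inter> endpoints (matched_cups l) = {}"
    unfolding canonical_rays_def by blast
  show "\<forall>(i, j)\<in>matched_cups l. \<forall>k\<in>canonical_rays l. \<not> (i < k \<and> k < j)"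
    unfolding canonical_rays_def using matched_cups_inside by blast
qed

lemma oriented_cup_canonical: "oriented_cup (canonical_cup_diagram l) l"
  unfolding oriented_cup_def canonical_cup_diagram_def cupdiag.sel
proof (intro conjI)
  show "\<forall>i. i \<notin> endpoints (matched_cups l) \<and> i \<notin> canonical_rays l \<longrightarrow> l i \<in> {Circ, Cross}"
    unfolding canonical_rays_def by (auto intro: vlabel.exhaust)
  show "\<forall>(i, j)\<in>matched_cups l. (l i = Down \<and> l j = Up) \<or> (l i = Up \<and> l j = Down)"
    using matched_cups_Down matched_cups_Up by blast
  show "\<forall>i\<in>canonical_rays l. l i \<in> {Down, Up}"
    unfolding canonical_rays_def by blast
  show "\<forall>i\<in>canonical_rays l. \<forall>j\<in>canonical_rays l. i < j \<longrightarrow> \<not> (l i = Down \<and> l j = Up)"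
  proof (intro ballI impI notI)
    fix i j
    assume rays: "i \<in> canonical_rays l" "j \<in> canonical_rays l" and "i < j" "l i = Down \<and> l j = Up"
    then have "(\<exists>q. (i, q) \<in> matched_cups l) \<or> (\<exists>p. (p, j) \<in> matched_cups l)"
      using Down_matched_if_height_nonpos[of l i j] Up_matched_if_height_nonneg[of l j i] by force
    then show False
      using rays unfolding canonical_rays_def endpoints_def by force
  qed
qed

lemma cup_degree_canonical: "cup_degree (canonical_cup_diagram l) l = 0"
proof -
  have "{(i, j). (i, j) \<in> matched_cups l \<and> l i = Up} = {}"
    using matched_cups_Down by fastforce
  then show ?thesis
    unfolding cup_degree_def canonical_cup_diagram_def cupdiag.sel by (simp only: card.empty)
qed

lemma cup_of_degree_0_is_matched:
  assumes c: "is_cup_diagram c" and l: "oriented_cup c l" and deg: "cup_degree c l = 0"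
    and ij: "(i, j) \<in> cups c"
  shows "(i, j) \<in> matched_cups l"
proof -
  have "i < j"
    using cup_diagram_lt[OF c ij] .
  have height_eq: "height l i k = int (card (open_cups c i k))" if "i \<le> k" "k \<le> j" for k
  proof -
    have "height l i k = (\<Sum>x\<in>open_cups c i k. vsign (l (fst x))) + (\<Sum>x\<in>rays c \<inter> {i..k}. vsign (l x))"
      using that cup_diagram_closing_inside_cup[OF c ij] by (intro height_through_cup_diagram[OF c l]) auto
    moreover have "rays c \<inter> {i..k} = {}"
      using cup_diagram_no_ray_under_cup[OF c ij] that by fastforce
    moreover have "vsign (l (fst x)) = 1" if "x \<in> open_cups c i k" for x
      using that cup_degree_0_anticlockwise[OF c l deg, of "fst x" "snd x"] unfolding open_cups_def by simp
    ultimately show ?thesis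
      by simp
  qed
  have "open_cups c i j = {}"
  proof (rule ccontr)
    assume "open_cups c i j \<noteq> {}"
    then obtain a b where ab: "(a, b) \<in> cups c" "i \<le> a" "a \<le> j" "j < b"
      unfolding open_cups_def by auto
    moreover have "a \<noteq> i"
      using cup_diagram_right_unique[OF c _ ij] ab(1,4) by fastforce
    moreover have "a \<noteq> j"
    proof
      assume "a = j"
      then have "a = i"
        using cup_diagram_disjoint[OF c ab(1) ij] by blast
      then show False
        using \<open>a = j\<close> \<open>i < j\<close> by simp
    qed
    ultimately show False
      using cup_diagram_nested[OF c ij ab(1)] by simp
  qed
  then have "height l i j = 0"
    using height_eq[of j] \<open>i < j\<close> by simp
  moreover have "height l i k > 0" if "i \<le> k" "k < j" for k
  proof -
    have "(i, j) \<in> open_cups c i k"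
      using ij that unfolding open_cups_def by simp
    moreover have "finite (open_cups c i k)"
      using cup_diagram_finite[OF c] unfolding open_cups_def by simp
    ultimately show ?thesis
      using height_eq[of k] that card_gt_0_iff by fastforce
  qed
  ultimately show ?thesis
    unfolding matched_cups_def using \<open>i < j\<close> cup_degree_0_anticlockwise[OF c l deg ij] by auto
qed

lemma matched_is_cup_of_degree_0:
  assumes c: "is_cup_diagram c" and l: "oriented_cup c l" and deg: "cup_degree c l = 0"
    and ij: "(i, j) \<in> matched_cups l"
  shows "(i, j) \<in> cups c"
proof (cases "i \<in> endpoints (cups c)")
  case True
  then consider j' where "(i, j') \<in> cups c" | a where "(a, i) \<in> cups c"
    unfolding endpoints_def by force
  then show ?thesis
  proof cases
    case 1
    then show ?thesis
      using matched_cups_right_unique[OF ij cup_of_degree_0_is_matched[OF c l deg 1]] by simp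
  next
    case 2
    then show ?thesis
      using cup_degree_0_anticlockwise[OF c l deg 2] matched_cups_Down[OF ij] by simp
  qed
next
  case False
  txt \<open>Then \<open>i\<close> is a ray labelled vee, so every ray to its right is a vee too, and the height
    from \<open>i\<close> cannot return to 0.\<close>
  have "l i = Down" "i < j"
    using matched_cupsD[OF ij] by simp_all
  then have ray: "i \<in> rays c"
    using oriented_cup_free[OF l False] by auto
  have "height l i j = (\<Sum>x\<in>open_cups c i j. vsign (l (fst x))) + (\<Sum>x\<in>rays c \<inter> {i..j}. vsign (l x))"
  proof (rule height_through_cup_diagram[OF c l])
    fix a b
    assume ab: "(a, b) \<in> cups c" "i \<le> b" "b \<le> j"
    have "b \<noteq> i"
      using False ab(1) unfolding endpoints_def by force
    then show "i \<le> a"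
      using cup_diagram_no_ray_under_cup[OF c ab(1) ray] ab(2) by simp
  qed
  moreover have "(\<Sum>x\<in>open_cups c i j. vsign (l (fst x))) \<ge> 0"
    using cup_degree_0_anticlockwise[OF c l deg] unfolding open_cups_def
    by (intro sum_nonneg) fastforce
  moreover have "(\<Sum>x\<in>rays c \<inter> {i..j}. vsign (l x)) = int (card (rays c \<inter> {i..j}))"
  proof -
    have "l x = Down" if "x \<in> rays c \<inter> {i..j}" for x
      using that oriented_cup_ray[OF l, of x] oriented_cup_rays_order[OF l ray, of x] \<open>l i = Down\<close>
      by (cases "x = i") auto
    then show ?thesis
      by simp
  qed
  moreover have "card (rays c \<inter> {i..j}) > 0"
    using ray \<open>i < j\<close> by (subst card_gt_0_iff) auto
  ultimately have "height l i j > 0"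
    by linarith
  then show ?thesis
    using matched_cups_height_zero[OF ij] by simp
qed

lemma cup_diagram_of_degree_0_unique:
  assumes c: "is_cup_diagram c" and l: "oriented_cup c l" and deg: "cup_degree c l = 0"
  shows "c = canonical_cup_diagram l"
proof -
  have cups_eq: "cups c = matched_cups l"
    using cup_of_degree_0_is_matched[OF c l deg] matched_is_cup_of_degree_0[OF c l deg] by auto
  have "rays c = canonical_rays l"
  proof (intro set_eqI iffI)
    fix x
    assume "x \<in> rays c"
    then show "x \<in> canonical_rays l"
      unfolding canonical_rays_def using oriented_cup_ray[OF l] cup_diagram_ray_not_endpoint[OF c] cups_eq
      by auto
  next
    fix x
    assume "x \<in> canonical_rays l"
    then have "l x \<in> {Down, Up}" "x \<notin> endpoints (cups c)"
      unfolding canonical_rays_def cups_eq by auto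
    show "x \<in> rays c"
    proof (rule ccontr)
      assume "x \<notin> rays c"
      then show False
        using oriented_cup_free[OF l, of x] \<open>l x \<in> {Down, Up}\<close> \<open>x \<notin> endpoints (cups c)\<close> by auto
    qed
  qed
  then show ?thesis
    unfolding canonical_cup_diagram_def using cups_eq by (metis cupdiag.collapse)
qed

lemma underline_eq_iff:
  assumes "weight l"
  shows "underline l = c \<longleftrightarrow> is_cup_diagram c \<and> oriented_cup c l \<and> cup_degree c l = 0"
proof -
  have "underline l = canonical_cup_diagram l"
    unfolding underline_def
  proof (rule the_equality)
    show "is_cup_diagram (canonical_cup_diagram l) \<and> oriented_cup (canonical_cup_diagram l) l \<and>
        cup_degree (canonical_cup_diagram l) l = 0"
      using is_cup_diagram_canonical[OF assms] oriented_cup_canonical cup_degree_canonical by blast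
  qed (use cup_diagram_of_degree_0_unique in blast)
  then show ?thesis
    using is_cup_diagram_canonical[OF assms] oriented_cup_canonical cup_degree_canonical
    by (auto dest: cup_diagram_of_degree_0_unique)
qed

section \<open>Permuting vees and wedges\<close>

lemma wsim_refl: "wsim m m"
  unfolding wsim_def by (rule exI[of _ id]) auto

lemma wsim_trans:
  assumes "wsim a b" "wsim b d"
  shows "wsim a d"
proof -
  obtain \<sigma> :: "int \<Rightarrow> int" where \<sigma>: "bij \<sigma>" "finite {i. \<sigma> i \<noteq> i}"
    "\<And>i. \<sigma> i \<noteq> i \<Longrightarrow> a i \<in> {Down, Up}" "b = a \<circ> \<sigma>"
    using assms(1) unfolding wsim_def by blast
  obtain \<tau> :: "int \<Rightarrow> int" where \<tau>: "bij \<tau>" "finite {i. \<tau> i \<noteq> i}"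
    "\<And>i. \<tau> i \<noteq> i \<Longrightarrow> b i \<in> {Down, Up}" "d = b \<circ> \<tau>"
    using assms(2) unfolding wsim_def by blast
  show ?thesis
    unfolding wsim_def
  proof (intro exI conjI allI impI)
    show "bij (\<sigma> \<circ> \<tau>)"
      using \<tau>(1) \<sigma>(1) by (rule bij_comp)
    have "{i. (\<sigma> \<circ> \<tau>) i \<noteq> i} \<subseteq> {i. \<sigma> i \<noteq> i} \<union> {i. \<tau> i \<noteq> i}"
      by auto
    then show "finite {i. (\<sigma> \<circ> \<tau>) i \<noteq> i}"
      using \<sigma>(2) \<tau>(2) by (simp add: finite_subset)
    show "d = a \<circ> (\<sigma> \<circ> \<tau>)"
      using \<sigma>(4) \<tau>(4) by (simp add: o_assoc)
    fix i
    assume moved: "(\<sigma> \<circ> \<tau>) i \<noteq> i"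
    show "a i \<in> {Down, Up}"
    proof (cases "\<sigma> i = i")
      case True
      then have "\<tau> i \<noteq> i"
        using moved by auto
      then have "b i \<in> {Down, Up}"
        by (rule \<tau>(3))
      then show ?thesis
        using \<sigma>(4) True by simp
    qed (rule \<sigma>(3))
  qed
qed

lemma wsim_swap:
  assumes "a i = Down" "a j = Up"
  shows "wsim a (a(i := Up, j := Down))"
  unfolding wsim_def
proof (intro exI conjI allI impI)
  show "bij (transpose i j)"
    by simp
  show "finite {k. transpose i j k \<noteq> k}"
    by (rule finite_subset[of _ "{i, j}"]) (auto simp: transpose_def)
  show "a k \<in> {Down, Up}" if "transpose i j k \<noteq> k" for k
  proof -
    have "k = i \<or> k = j"
      using that by (metis transpose_apply_other)
    then show ?thesis
      using assms by auto
  qed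
  show "a(i := Up, j := Down) = a \<circ> transpose i j"
    using assms by (auto simp: fun_eq_iff transpose_def)
qed

lemma wsim_support:
  assumes "wsim m l"
  obtains S where "finite S" "\<And>x. x \<notin> S \<Longrightarrow> l x = m x" "\<And>x. x \<in> S \<Longrightarrow> m x \<in> {Down, Up}"
    "\<And>p q. S \<subseteq> {p..q} \<Longrightarrow> height l p q = height m p q"
proof -
  obtain \<sigma> :: "int \<Rightarrow> int" where \<sigma>: "bij \<sigma>" "finite {i. \<sigma> i \<noteq> i}"
    "\<And>i. \<sigma> i \<noteq> i \<Longrightarrow> m i \<in> {Down, Up}" and l: "l = m \<circ> \<sigma>"
    using assms unfolding wsim_def by blast
  show ?thesis
  proof (rule that)
    show "finite {i. \<sigma> i \<noteq> i}"
      by (rule \<sigma>(2))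
    show "l x = m x" if "x \<notin> {i. \<sigma> i \<noteq> i}" for x
      using that l by simp
    show "m x \<in> {Down, Up}" if "x \<in> {i. \<sigma> i \<noteq> i}" for x
      using that \<sigma>(3) by simp
    show "height l p q = height m p q" if "{i. \<sigma> i \<noteq> i} \<subseteq> {p..q}" for p q
    proof -
      have "\<forall>x. x \<notin> {p..q} \<longrightarrow> \<sigma> x = x"
        using that by blast
      then have "\<sigma> permutes {p..q}"
        using \<sigma>(1) unfolding permutes_def bij_iff by simp
      then show ?thesis
        unfolding height_def l using sum.permute[of \<sigma> "{p..q}" "\<lambda>k. vsign (m k)"] by (simp add: o_def)
    qed
  qed
qed

lemma ray_sum_strict_mono:
  assumes g: "oriented_cup c g" and h: "oriented_cup c h" and "finite R" "R \<subseteq> rays c"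
    and "x \<in> R" "g x = Up" "h x = Down"
  shows "(\<Sum>y\<in>R. vsign (g y)) < (\<Sum>y\<in>R. vsign (h y))"
proof (rule sum_strict_mono_ex1[OF \<open>finite R\<close>])
  show "\<forall>y\<in>R. vsign (g y) \<le> vsign (h y)"
  proof
    fix y
    assume "y \<in> R"
    then have y: "y \<in> rays c" and x: "x \<in> rays c"
      using assms by auto
    consider "y < x" | "y = x" | "x < y"
      by linarith
    then show "vsign (g y) \<le> vsign (h y)"
    proof cases
      case 1
      then have "g y = Up"
        using oriented_cup_rays_order[OF g y x] oriented_cup_ray[OF g y] \<open>g x = Up\<close> by auto
      then show ?thesis
        using vsign_bounds[of "h y"] by simp
    next
      case 2
      then show ?thesis
        using assms by simp
    next
      case 3
      then have "h y = Down"
        using oriented_cup_rays_order[OF h x y] oriented_cup_ray[OF h y] \<open>h x = Down\<close> by auto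
      then show ?thesis
        using vsign_bounds[of "g y"] by simp
    qed
  qed
  show "\<exists>y\<in>R. vsign (g y) < vsign (h y)"
    using assms by force
qed

lemma wsim_oriented_cup_agree:
  assumes c: "is_cup_diagram c" and m: "oriented_cup c m" and l: "oriented_cup c l"
    and "wsim m l" and x: "x \<notin> endpoints (cups c)"
  shows "l x = m x"
proof (rule ccontr)
  assume differ: "l x \<noteq> m x"
  obtain S where "finite S" and S: "\<And>x. x \<notin> S \<Longrightarrow> l x = m x" "\<And>x. x \<in> S \<Longrightarrow> m x \<in> {Down, Up}"
    and heights: "\<And>p q. S \<subseteq> {p..q} \<Longrightarrow> height l p q = height m p q"
    using wsim_support[OF \<open>wsim m l\<close>] by blast
  have "m x \<in> {Down, Up}"
    using S differ by blast
  have ray: "x \<in> rays c"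
  proof (rule ccontr)
    assume "x \<notin> rays c"
    then show False
      using oriented_cup_free[OF m x] \<open>m x \<in> {Down, Up}\<close> by auto
  qed
  define U where "U = insert x (S \<union> endpoints (cups c))"
  have "finite U"
    unfolding U_def endpoints_def using \<open>finite S\<close> cup_diagram_finite[OF c] by simp
  then have U: "U \<subseteq> {Min U..Max U}"
    by (auto intro: Min_le Max_ge)
  let ?R = "rays c \<inter> {Min U..Max U}"
  have "(\<Sum>y\<in>?R. vsign (l y)) = (\<Sum>y\<in>?R. vsign (m y))"
    using heights[of "Min U" "Max U"] height_eq_ray_sum[OF c l] height_eq_ray_sum[OF c m] U
    unfolding U_def by auto
  moreover have "x \<in> ?R"
    using ray U unfolding U_def by auto
  moreover have "l x \<in> {Down, Up}"
    using oriented_cup_ray[OF l ray] .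
  ultimately show False
    using ray_sum_strict_mono[OF l m, of ?R x] ray_sum_strict_mono[OF m l, of ?R x]
      \<open>m x \<in> {Down, Up}\<close> differ by auto
qed

section \<open>Reversing cups\<close>

definition clockwise_on :: "(int \<times> int) set \<Rightarrow> wt \<Rightarrow> wt" where
  "clockwise_on C m x = (if x \<in> fst ` C then Up else if x \<in> snd ` C then Down else m x)"

definition anticlockwise_on :: "(int \<times> int) set \<Rightarrow> wt \<Rightarrow> wt" where
  "anticlockwise_on C l x = (if x \<in> fst ` C then Down else if x \<in> snd ` C then Up else l x)"

lemma cup_diagram_endpoint_membership:
  assumes c: "is_cup_diagram c" and C: "C \<subseteq> cups c" and ij: "(i, j) \<in> cups c"
  shows "i \<in> fst ` C \<longleftrightarrow> (i, j) \<in> C" "i \<notin> snd ` C"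
    and "j \<in> snd ` C \<longleftrightarrow> (i, j) \<in> C" "j \<notin> fst ` C"
proof -
  show "i \<in> fst ` C \<longleftrightarrow> (i, j) \<in> C"
  proof
    assume "i \<in> fst ` C"
    then obtain q where "(i, q) \<in> C"
      by force
    then show "(i, j) \<in> C"
      using cup_diagram_right_unique[OF c ij, of q] C by auto
  qed force
  show "j \<in> snd ` C \<longleftrightarrow> (i, j) \<in> C"
  proof
    assume "j \<in> snd ` C"
    then obtain p where "(p, j) \<in> C"
      by force
    then show "(i, j) \<in> C"
      using cup_diagram_left_unique[OF c ij, of p] C by auto
  qed force
  have "i \<in> fst ` cups c" "j \<in> snd ` cups c"
    using ij by force+
  moreover have "fst ` C \<subseteq> fst ` cups c" "snd ` C \<subseteq> snd ` cups c"
    using C by (simp_all add: image_mono)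
  ultimately show "i \<notin> snd ` C" "j \<notin> fst ` C"
    using cup_diagram_fst_snd_disjoint[OF c] by blast+
qed

lemma clockwise_on_cup:
  assumes "is_cup_diagram c" "C \<subseteq> cups c" "(i, j) \<in> cups c"
  shows "clockwise_on C m i = (if (i, j) \<in> C then Up else m i)"
    and "clockwise_on C m j = (if (i, j) \<in> C then Down else m j)"
  using cup_diagram_endpoint_membership[OF assms] unfolding clockwise_on_def by auto

lemma clockwise_on_outside: "x \<notin> endpoints C \<Longrightarrow> clockwise_on C m x = m x"
  unfolding clockwise_on_def endpoints_def by auto

lemma anticlockwise_on_cup:
  assumes "is_cup_diagram c" "(i, j) \<in> cups c"
  shows "anticlockwise_on (cups c) l i = Down \<and> anticlockwise_on (cups c) l j = Up"
  using cup_diagram_endpoint_membership[OF assms(1) subset_refl assms(2)] assms(2)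
  unfolding anticlockwise_on_def by auto

lemma anticlockwise_on_outside: "x \<notin> endpoints C \<Longrightarrow> anticlockwise_on C l x = l x"
  unfolding anticlockwise_on_def endpoints_def by auto

lemma clockwise_on_closure:
  assumes c: "is_cup_diagram c" and "C \<subseteq> cups c"
    and anti: "\<And>i j. (i, j) \<in> C \<Longrightarrow> m i = Down \<and> m j = Up"
    and refl: "R m m"
    and step: "\<And>a i j. R m a \<Longrightarrow> i < j \<Longrightarrow> a i = Down \<Longrightarrow> a j = Up \<Longrightarrow> R m (a(i := Up, j := Down))"
  shows "R m (clockwise_on C m)"
proof -
  have "finite C"
    using cup_diagram_finite[OF c] assms(2) by (rule finite_subset[rotated])
  then show ?thesis
    using assms(2) anti
  proof (induction C rule: finite_induct)
    case empty
    have "clockwise_on {} m = m"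
      by (simp add: fun_eq_iff clockwise_on_def)
    then show ?case
      using refl by simp
  next
    case (insert x F)
    obtain i j where x: "x = (i, j)"
      by fastforce
    have ij: "(i, j) \<in> cups c" and F: "F \<subseteq> cups c"
      using insert.prems(1) x by auto
    have anti_ij: "clockwise_on F m i = Down" "clockwise_on F m j = Up"
      using clockwise_on_cup[OF c F ij] insert.hyps(2) insert.prems(2)[of i j] x by simp_all
    have insert_eq: "clockwise_on (insert x F) m = (clockwise_on F m)(i := Up, j := Down)"
    proof
      fix y
      consider "y = i" | "y = j" | "y \<noteq> i" "y \<noteq> j"
        by blast
      then show "clockwise_on (insert x F) m y = ((clockwise_on F m)(i := Up, j := Down)) y"
      proof cases
        case 1
        then show ?thesis
          using clockwise_on_cup(1)[OF c insert.prems(1) ij] cup_diagram_lt[OF c ij] x by simp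
      next
        case 2
        then show ?thesis
          using clockwise_on_cup(2)[OF c insert.prems(1) ij] x by simp
      next
        case 3
        then show ?thesis
          unfolding clockwise_on_def x by auto
      qed
    qed
    have "R m (clockwise_on F m)"
      using insert.IH insert.prems by blast
    then show ?case
      unfolding insert_eq using cup_diagram_lt[OF c ij] anti_ij by (rule step)
  qed
qed

lemma bruhat_le_clockwise_on:
  assumes "is_cup_diagram c" "C \<subseteq> cups c" "\<And>i j. (i, j) \<in> C \<Longrightarrow> m i = Down \<and> m j = Up"
  shows "bruhat_le m (clockwise_on C m)"
  unfolding bruhat_le_def
proof (rule clockwise_on_closure[OF assms])
  show "bruhat_step\<^sup>*\<^sup>* m (a(i := Up, j := Down))"
    if "bruhat_step\<^sup>*\<^sup>* m a" "i < j" "a i = Down" "a j = Up" for a i j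
  proof -
    have "bruhat_step a (a(i := Up, j := Down))"
      unfolding bruhat_step_def using that(2-4) by blast
    then show ?thesis
      using that(1) by (simp add: rtranclp.rtrancl_into_rtrancl)
  qed
qed auto

lemma wsim_clockwise_on:
  assumes "is_cup_diagram c" "C \<subseteq> cups c" "\<And>i j. (i, j) \<in> C \<Longrightarrow> m i = Down \<and> m j = Up"
  shows "wsim m (clockwise_on C m)"
proof (rule clockwise_on_closure[OF assms])
  show "wsim m (a(i := Up, j := Down))" if "wsim m a" "a i = Down" "a j = Up" for a i j
    using wsim_trans[OF that(1) wsim_swap[OF that(2,3)]] .
qed (auto intro: wsim_refl)

lemma oriented_cup_eq_clockwise_on:
  assumes c: "is_cup_diagram c" and g: "oriented_cup c g"
    and anti: "\<And>i j. (i, j) \<in> cups c \<Longrightarrow> m i = Down \<and> m j = Up"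
    and outside: "\<And>x. x \<notin> endpoints (cups c) \<Longrightarrow> g x = m x"
  shows "g = clockwise_on (clockwise_cups c g) m"
proof
  fix x
  note C = clockwise_cups_subset[of c g]
  show "g x = clockwise_on (clockwise_cups c g) m x"
  proof (cases "x \<in> endpoints (cups c)")
    case False
    then have "x \<notin> endpoints (clockwise_cups c g)"
      using endpoints_mono[OF C] by blast
    then show ?thesis
      using outside[OF False] by (simp add: clockwise_on_outside)
  next
    case True
    then obtain i j where ij: "(i, j) \<in> cups c" and x: "x = i \<or> x = j"
      unfolding endpoints_def by force
    have "(i, j) \<in> clockwise_cups c g \<longleftrightarrow> g i = Up"
      using ij unfolding clockwise_cups_def by simp
    then have "clockwise_on (clockwise_cups c g) m i = g i" "clockwise_on (clockwise_cups c g) m j = g j"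
      using clockwise_on_cup[OF c C ij] oriented_cup_ends[OF g ij] anti[OF ij] by auto
    then show ?thesis
      using x by auto
  qed
qed

lemma weight_finite_modification:
  assumes "weight l" "finite {x. l' x \<noteq> l x}"
  shows "weight l'"
proof -
  obtain F where "finite F" and F: "\<forall>i j. i \<notin> F \<longrightarrow> j \<notin> F \<longrightarrow> i < j \<longrightarrow> \<not> (l i = Down \<and> l j = Up)"
    using assms(1) unfolding weight_def by blast
  show ?thesis
    unfolding weight_def
  proof (intro exI conjI)
    show "finite (F \<union> {x. l' x \<noteq> l x})"
      using \<open>finite F\<close> assms(2) by simp
    show "\<forall>i j. i \<notin> F \<union> {x. l' x \<noteq> l x} \<longrightarrow> j \<notin> F \<union> {x. l' x \<noteq> l x} \<longrightarrow> i < j \<longrightarrow>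
        \<not> (l' i = Down \<and> l' j = Up)"
      using F by auto
  qed
qed

lemma wsub_imp_bruhat_le:
  assumes "weight m" "wsub m l"
  shows "bruhat_le m l"
proof -
  let ?c = "underline m"
  have c: "is_cup_diagram ?c" and m: "oriented_cup ?c m" and deg: "cup_degree ?c m = 0"
    using underline_eq_iff[OF assms(1)] by blast+
  have l: "oriented_cup ?c l" and "wsim m l"
    using assms(2) unfolding wsub_def by blast+
  have anti: "\<And>i j. (i, j) \<in> cups ?c \<Longrightarrow> m i = Down \<and> m j = Up"
    using cup_degree_0_anticlockwise[OF c m deg] .
  have "l = clockwise_on (clockwise_cups ?c l) m"
    using oriented_cup_eq_clockwise_on[where m = m, OF c l anti] wsim_oriented_cup_agree[OF c m l \<open>wsim m l\<close>]
    by blast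
  moreover have "bruhat_le m (clockwise_on (clockwise_cups ?c l) m)"
    using anti by (intro bruhat_le_clockwise_on[OF c clockwise_cups_subset]) (auto simp: clockwise_cups_def)
  ultimately show ?thesis
    by simp
qed

lemma ex1_underline_wsub:
  assumes "weight l" and a: "is_cup_diagram a" and l: "oriented_cup a l"
  shows "\<exists>!\<alpha>. weight \<alpha> \<and> a = underline \<alpha> \<and> wsub \<alpha> l"
proof
  let ?\<alpha> = "anticlockwise_on (cups a) l"
  have anti: "\<And>i j. (i, j) \<in> cups a \<Longrightarrow> ?\<alpha> i = Down \<and> ?\<alpha> j = Up"
    using anticlockwise_on_cup[OF a] .
  have outside: "\<And>x. x \<notin> endpoints (cups a) \<Longrightarrow> l x = ?\<alpha> x"
    by (simp add: anticlockwise_on_outside)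
  have "oriented_cup a ?\<alpha>"
  proof (rule oriented_cup_reorient[OF a l])
    show "?\<alpha> x = l x" if "x \<notin> endpoints (cups a)" for x
      using that by (rule anticlockwise_on_outside)
    show "(?\<alpha> i = Down \<and> ?\<alpha> j = Up) \<or> (?\<alpha> i = Up \<and> ?\<alpha> j = Down)" if "(i, j) \<in> cups a" for i j
      using anti[OF that] by simp
  qed
  moreover have "cup_degree a ?\<alpha> = 0"
    using anti unfolding cup_degree_eq_0_iff[OF a] clockwise_cups_def by fastforce
  moreover have "weight ?\<alpha>"
  proof (rule weight_finite_modification[OF \<open>weight l\<close>])
    have "finite (endpoints (cups a))"
      using cup_diagram_finite[OF a] unfolding endpoints_def by simp
    moreover have "{x. ?\<alpha> x \<noteq> l x} \<subseteq> endpoints (cups a)"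
      using outside by force
    ultimately show "finite {x. ?\<alpha> x \<noteq> l x}"
      by (rule finite_subset[rotated])
  qed
  ultimately have "underline ?\<alpha> = a"
    using underline_eq_iff a by blast
  moreover have "wsim ?\<alpha> l"
  proof -
    have "l = clockwise_on (clockwise_cups a l) ?\<alpha>"
      using oriented_cup_eq_clockwise_on[where m = ?\<alpha>, OF a l anti outside] .
    moreover have "wsim ?\<alpha> (clockwise_on (clockwise_cups a l) ?\<alpha>)"
      using anti by (intro wsim_clockwise_on[OF a clockwise_cups_subset]) (auto simp: clockwise_cups_def)
    ultimately show ?thesis
      by simp
  qed
  ultimately show "weight ?\<alpha> \<and> a = underline ?\<alpha> \<and> wsub ?\<alpha> l"
    using \<open>weight ?\<alpha>\<close> l unfolding wsub_def by simp
next
  fix \<beta>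
  assume \<beta>: "weight \<beta> \<and> a = underline \<beta> \<and> wsub \<beta> l"
  then have \<beta>_a: "oriented_cup a \<beta>" "cup_degree a \<beta> = 0" and "wsim \<beta> l"
    using underline_eq_iff[of \<beta> a] unfolding wsub_def by auto
  show "\<beta> = anticlockwise_on (cups a) l"
  proof
    fix x
    show "\<beta> x = anticlockwise_on (cups a) l x"
    proof (cases "x \<in> endpoints (cups a)")
      case True
      then obtain i j where ij: "(i, j) \<in> cups a" and "x = i \<or> x = j"
        unfolding endpoints_def by force
      then show ?thesis
        using cup_degree_0_anticlockwise[OF a \<beta>_a ij] anticlockwise_on_cup[OF a ij] by auto
    next
      case False
      then show ?thesis
        using wsim_oriented_cup_agree[OF a \<beta>_a(1) l \<open>wsim \<beta> l\<close> False]
        by (simp add: anticlockwise_on_outside)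
    qed
  qed
qed

lemma ex1_overline_wsub:
  assumes "weight l" "is_cap_diagram b" "oriented_cap l b"
  shows "\<exists>!\<beta>. weight \<beta> \<and> b = overline \<beta> \<and> wsub \<beta> l"
proof -
  have mirror: "b = overline \<beta> \<longleftrightarrow> cap_mirror b = underline \<beta>" for \<beta>
    unfolding overline_def cup_mirror_def cap_mirror_def by (cases b; cases "underline \<beta>") auto
  have "\<exists>!\<beta>. weight \<beta> \<and> cap_mirror b = underline \<beta> \<and> wsub \<beta> l"
    using ex1_underline_wsub[OF assms(1)] assms(2,3) unfolding is_cap_diagram_def oriented_cap_def by blast
  then show ?thesis
    by (simp only: mirror)
qed

lemma ex1_prodI:
  assumes "\<exists>!x. P x" "\<exists>!y. Q y"
  shows "\<exists>!z. P (fst z) \<and> Q (snd z)"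
proof -
  obtain x y where "P x" "Q y" and uniq: "\<And>x'. P x' \<Longrightarrow> x' = x" "\<And>y'. Q y' \<Longrightarrow> y' = y"
    using assms by blast
  show ?thesis
  proof (rule ex1I[of _ "(x, y)"])
    show "\<And>z. P (fst z) \<and> Q (snd z) \<Longrightarrow> z = (x, y)"
      using uniq by (simp add: prod_eq_iff)
  qed (simp add: \<open>P x\<close> \<open>Q y\<close>)
qed

theorem lemma2p3:
  fixes l m :: wt
  assumes "weight l" and "weight m"
  shows "(wsub m l \<longrightarrow> bruhat_le m l) \<and>
    (\<forall>a. is_cup_diagram a \<and> oriented_cup a l \<longrightarrow>
        (\<exists>!\<alpha>. weight \<alpha> \<and> a = underline \<alpha> \<and> wsub \<alpha> l)) \<and>
    (\<forall>b. is_cap_diagram b \<and> oriented_cap l b \<longrightarrow>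
        (\<exists>!\<beta>. weight \<beta> \<and> b = overline \<beta> \<and> wsub \<beta> l)) \<and>
    (\<forall>a b. is_cup_diagram a \<and> is_cap_diagram b \<and> oriented_cup a l \<and> oriented_cap l b \<longrightarrow>
        (\<exists>!p. weight (fst p) \<and> weight (snd p) \<and> a = underline (fst p) \<and> b = overline (snd p)
              \<and> wsub (fst p) l \<and> wsub (snd p) l))"
proof (intro conjI allI impI)
  show "bruhat_le m l" if "wsub m l"
    using assms(2) that by (rule wsub_imp_bruhat_le)
  show "\<exists>!\<alpha>. weight \<alpha> \<and> a = underline \<alpha> \<and> wsub \<alpha> l" if "is_cup_diagram a \<and> oriented_cup a l" for a
    using ex1_underline_wsub[OF assms(1)] that by blast
  show "\<exists>!\<beta>. weight \<beta> \<and> b = overline \<beta> \<and> wsub \<beta> l" if "is_cap_diagram b \<and> oriented_cap l b" for b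
    using ex1_overline_wsub[OF assms(1)] that by blast
  fix a b
  assume "is_cup_diagram a \<and> is_cap_diagram b \<and> oriented_cup a l \<and> oriented_cap l b"
  then have "\<exists>!p. (weight (fst p) \<and> a = underline (fst p) \<and> wsub (fst p) l) \<and>
      (weight (snd p) \<and> b = overline (snd p) \<and> wsub (snd p) l)"
    using ex1_underline_wsub[OF assms(1)] ex1_overline_wsub[OF assms(1)] by (intro ex1_prodI) auto
  then show "\<exists>!p. weight (fst p) \<and> weight (snd p) \<and> a = underline (fst p) \<and> b = overline (snd p)
      \<and> wsub (fst p) l \<and> wsub (snd p) l"
    by (simp only: conj_ac)
qed

end
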